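(* For every integer $k\ge 2$ and every $0<\varepsilon\le 1$ there exists a positive integer $N(k,\varepsilon)$ such that the following holds. If $n$ is a positive integer, $A$ is an alphabet with $|A|=k$ and $D\subseteq A^n$, then there exist a positive integer $M\le N(k,\varepsilon)$, a partition $\mathcal{P}$ of $A^n$ with $\mathcal{P}\subseteq\mathcal{S}(A^n)$ and $|\mathcal{P}|=M$, and a subfamily $\mathcal{P}'\subseteq\mathcal{P}$ with $\mathbb{P}(\bigcup\mathcal{P}')\ge 1-\varepsilon$ such that $|\mathbb{P}_T(D)-\mathbb{P}_S(D)|\le\varepsilon$ for every $S\in\mathcal{P}'$ and every $T\subseteq S$ with $T\in\mathcal{S}(A^n)$ and $|T|\ge\varepsilon|S|$.
   Context: $A$ is a finite set, $A^n$ the set of sequences $(a_0,\dots,a_{n-1})$ with entries in $A$; $\mathbb{P}$ is the uniform probability measure on $A^n$, and for nonempty $S\subseteq A^n$, $\mathbb{P}_S(X)=|X\cap S|/|S|$. For distinct $a,b\in A$, $z,y\in A^n$ are $(a,b)$-equivalent if for every coordinate $i$ and every $\gamma\in A\setminus\{a,b\}$, $z_i=\gamma$ iff $y_i=\gamma$. A set $X\subseteq A^n$ is $(a,b)$-insensitive if it is a union of $(a,b)$-equivalence classes. $\mathcal{S}(A^n)$ is the family of all sets of the form $\bigcap_{\{a,b\}} X_{\{a,b\}}$, the intersection over all 2-element subsets $\{a,b\}$ of $A$, where each $X_{\{a,b\}}$ is $(a,b)$-insensitive. $\mathcal{P}\subseteq\mathcal{S}(A^n)$ means every member of the partition lies in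 $\mathcal{S}(A^n)$. *)

theory Defs
  imports Complex_Main "HOL-Library.FuncSet"
begin

definition cube :: "'a set \<Rightarrow> nat \<Rightarrow> (nat \<Rightarrow> 'a) set" where
  "cube A n = ({..<n} \<rightarrow>\<^sub>E A)"

definition unif_prob :: "'a set \<Rightarrow> nat \<Rightarrow> (nat \<Rightarrow> 'a) set \<Rightarrow> real" where
  "unif_prob A n X = real (card (X \<inter> cube A n)) / real (card (cube A n))"

definition cond_prob :: "(nat \<Rightarrow> 'a) set \<Rightarrow> (nat \<Rightarrow> 'a) set \<Rightarrow> real" where
  "cond_prob S X = real (card (X \<inter> S)) / real (card S)"

definition ab_equiv :: "'a set \<Rightarrow> nat \<Rightarrow> 'a \<Rightarrow> 'a \<Rightarrow> (nat \<Rightarrow> 'a) \<Rightarrow> (nat \<Rightarrow> 'a) \<Rightarrow> bool" where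
  "ab_equiv A n a b z y \<longleftrightarrow>
     (\<forall>i<n. \<forall>\<gamma>\<in>A - {a, b}. (z i = \<gamma>) \<longleftrightarrow> (y i = \<gamma>))"

definition ab_insensitive :: "'a set \<Rightarrow> nat \<Rightarrow> 'a \<Rightarrow> 'a \<Rightarrow> (nat \<Rightarrow> 'a) set \<Rightarrow> bool" where
  "ab_insensitive A n a b X \<longleftrightarrow>
     X \<subseteq> cube A n \<and> (\<forall>z\<in>X. \<forall>y\<in>cube A n. ab_equiv A n a b z y \<longrightarrow> y \<in> X)"

definition S_family :: "'a set \<Rightarrow> nat \<Rightarrow> (nat \<Rightarrow> 'a) set set" where
  "S_family A n = {Y. \<exists>F :: 'a set \<Rightarrow> (nat \<Rightarrow> 'a) set.
      (\<forall>a\<in>A. \<forall>b\<in>A. a \<noteq> b \<longrightarrow> ab_insensitive A n a b (F {a, b})) \<and>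
      Y = cube A n \<inter> (\<Inter>{F {a, b} | a b. a \<in> A \<and> b \<in> A \<and> a \<noteq> b})}"

definition is_partition :: "'b set \<Rightarrow> 'b set set \<Rightarrow> bool" where
  "is_partition U P \<longleftrightarrow> \<Union>P = U \<and> (\<forall>X\<in>P. X \<noteq> {}) \<and>
     (\<forall>X\<in>P. \<forall>Y\<in>P. X \<noteq> Y \<longrightarrow> X \<inter> Y = {})"

end

theory Submission
  imports Defs
begin

text \<open>Energy increment. The energy \<open>\<Sum>X\<in>P. |X| \<P>\<^sub>X(D)\<^sup>2\<close> of a partition \<open>P\<close>
  of \<open>A\<^sup>n\<close> never exceeds \<open>|A\<^sup>n|\<close>. If the cells on which \<open>D\<close> is \<open>\<epsilon>\<close>-regular
  cover less than a \<open>1 - \<epsilon>\<close> fraction of \<open>A\<^sup>n\<close>, every irregular cell \<open>S\<close> has a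
  witness \<open>T \<in> \<S>(A\<^sup>n)\<close> with \<open>|T| \<ge> \<epsilon>|S|\<close> on which the density of \<open>D\<close> is off by
  more than \<open>\<epsilon>\<close>. The atoms of the Boolean algebra generated by the \<open>(a,b)\<close>-insensitive
  sets defining \<open>T\<close> lie in \<open>\<S>(A\<^sup>n)\<close>, so \<open>S\<close> splits into at most \<open>2^(k\<^sup>2)\<close>
  members of \<open>\<S>(A\<^sup>n)\<close>, one of which is \<open>T\<close>; by the variance identity this raises the
  energy by at least \<open>\<epsilon>\<^sup>3|S|\<close>, hence the total energy by \<open>\<epsilon>\<^sup>4|A\<^sup>n|\<close>. So after
  \<open>\<lceil>1/\<epsilon>\<^sup>4\<rceil> + 1\<close> rounds the regular cells must cover a \<open>1 - \<epsilon>\<close> fraction.\<close>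

subsection \<open>The family \<open>\<S>(A\<^sup>n)\<close>\<close>

lemma finite_cube: "finite A \<Longrightarrow> finite (cube A n)"
  unfolding cube_def by (rule finite_PiE) auto

lemma cube_nonempty: "A \<noteq> {} \<Longrightarrow> cube A n \<noteq> {}"
  unfolding cube_def by (simp add: PiE_eq_empty_iff)

lemma ab_insensitive_cube: "ab_insensitive A n a b (cube A n)"
  unfolding ab_insensitive_def by auto

lemma ab_insensitive_Int:
  "ab_insensitive A n a b X \<Longrightarrow> ab_insensitive A n a b Y \<Longrightarrow> ab_insensitive A n a b (X \<inter> Y)"
  unfolding ab_insensitive_def by blast

lemma ab_insensitive_Diff:
  assumes "ab_insensitive A n a b X"
  shows "ab_insensitive A n a b (cube A n - X)"
proof -
  have "ab_equiv A n a b y z" if "ab_equiv A n a b z y" for y z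
    using that unfolding ab_equiv_def by metis
  then show ?thesis
    using assms unfolding ab_insensitive_def by blast
qed

lemma mem_Inter_pairs:
  "y \<in> \<Inter>{F {a, b} | a b. a \<in> A \<and> b \<in> A \<and> a \<noteq> b} \<longleftrightarrow> (\<forall>a\<in>A. \<forall>b\<in>A. a \<noteq> b \<longrightarrow> y \<in> F {a, b})"
  by blast

lemma S_familyE:
  assumes "Y \<in> S_family A n"
  obtains F where "\<And>a b. a \<in> A \<Longrightarrow> b \<in> A \<Longrightarrow> a \<noteq> b \<Longrightarrow> ab_insensitive A n a b (F {a, b})"
    and "\<And>y. y \<in> Y \<longleftrightarrow> y \<in> cube A n \<and> (\<forall>a\<in>A. \<forall>b\<in>A. a \<noteq> b \<longrightarrow> y \<in> F {a, b})"
proof -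
  obtain F where F: "\<forall>a\<in>A. \<forall>b\<in>A. a \<noteq> b \<longrightarrow> ab_insensitive A n a b (F {a, b})"
    and Y: "Y = cube A n \<inter> \<Inter>{F {a, b} | a b. a \<in> A \<and> b \<in> A \<and> a \<noteq> b}"
    using assms unfolding S_family_def by blast
  show thesis
    by (rule that[of F]) (use F in blast, simp only: Y Int_iff mem_Inter_pairs)
qed

lemma S_familyI:
  assumes "\<And>a b. a \<in> A \<Longrightarrow> b \<in> A \<Longrightarrow> a \<noteq> b \<Longrightarrow> ab_insensitive A n a b (F {a, b})"
    and "\<And>y. y \<in> Y \<longleftrightarrow> y \<in> cube A n \<and> (\<forall>a\<in>A. \<forall>b\<in>A. a \<noteq> b \<longrightarrow> y \<in> F {a, b})"
  shows "Y \<in> S_family A n"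
proof -
  have "Y = cube A n \<inter> \<Inter>{F {a, b} | a b. a \<in> A \<and> b \<in> A \<and> a \<noteq> b}"
    by (rule set_eqI) (simp only: assms(2) Int_iff mem_Inter_pairs)
  then show ?thesis
    unfolding S_family_def using assms(1) by blast
qed

lemma S_family_subset_cube: "Y \<in> S_family A n \<Longrightarrow> Y \<subseteq> cube A n"
  unfolding S_family_def by blast

lemma cube_in_S_family: "cube A n \<in> S_family A n"
  by (rule S_familyI[where F = "\<lambda>_. cube A n"]) (auto intro: ab_insensitive_cube)

lemma S_family_Int:
  assumes "Y \<in> S_family A n" and "Z \<in> S_family A n"
  shows "Y \<inter> Z \<in> S_family A n"
proof -
  obtain F where
    F: "\<And>a b. a \<in> A \<Longrightarrow> b \<in> A \<Longrightarrow> a \<noteq> b \<Longrightarrow> ab_insensitive A n a b (F {a, b})"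
    and Y: "\<And>y. y \<in> Y \<longleftrightarrow> y \<in> cube A n \<and> (\<forall>a\<in>A. \<forall>b\<in>A. a \<noteq> b \<longrightarrow> y \<in> F {a, b})"
    using assms(1) by (rule S_familyE) iprover
  obtain G where
    G: "\<And>a b. a \<in> A \<Longrightarrow> b \<in> A \<Longrightarrow> a \<noteq> b \<Longrightarrow> ab_insensitive A n a b (G {a, b})"
    and Z: "\<And>y. y \<in> Z \<longleftrightarrow> y \<in> cube A n \<and> (\<forall>a\<in>A. \<forall>b\<in>A. a \<noteq> b \<longrightarrow> y \<in> G {a, b})"
    using assms(2) by (rule S_familyE) iprover
  show ?thesis
  proof (rule S_familyI[where F = "\<lambda>p. F p \<inter> G p"])
    show "ab_insensitive A n a b (F {a, b} \<inter> G {a, b})" if "a \<in> A" "b \<in> A" "a \<noteq> b" for a b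
      using F[OF that] G[OF that] by (rule ab_insensitive_Int)
    show "y \<in> Y \<inter> Z \<longleftrightarrow> y \<in> cube A n \<and> (\<forall>a\<in>A. \<forall>b\<in>A. a \<noteq> b \<longrightarrow> y \<in> F {a, b} \<inter> G {a, b})" for y
      unfolding Int_iff Y Z by blast
  qed
qed

lemma is_partition_fibers: "is_partition S ((\<lambda>q. {y \<in> S. f y = q}) ` f ` S)"
  unfolding is_partition_def by auto

lemma is_partition_singleton: "S \<noteq> {} \<Longrightarrow> is_partition S {S}"
  unfolding is_partition_def by blast

lemma is_partition_subset: "is_partition S P \<Longrightarrow> X \<in> P \<Longrightarrow> X \<subseteq> S"
  unfolding is_partition_def by blast

lemma is_partition_finite: "is_partition S P \<Longrightarrow> finite S \<Longrightarrow> finite P"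
  unfolding is_partition_def by (metis Pow_iff Sup_upper finite_Pow_iff finite_subset subsetI)

lemma is_partition_card_Union:
  assumes "is_partition U P" and "finite U" and "B \<subseteq> P"
  shows "card (\<Union>B) = (\<Sum>S\<in>B. card S)"
proof (rule card_Union_disjoint)
  show "pairwise disjnt B"
    using assms(1,3) unfolding is_partition_def pairwise_def disjnt_def by blast
  show "finite S" if "S \<in> B" for S
    using is_partition_subset[OF assms(1)] assms(2,3) that by (meson finite_subset subsetD)
qed

lemma is_partition_sum_card_Int:
  assumes "is_partition S P" and "finite S"
  shows "(\<Sum>X\<in>P. card (D \<inter> X)) = card (D \<inter> S)"
proof -
  have "card (\<Union>X\<in>P. D \<inter> X) = (\<Sum>X\<in>P. card (D \<inter> X))"
  proof (rule card_UN_disjoint)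
    show "finite P" using is_partition_finite[OF assms] .
    show "\<forall>X\<in>P. finite (D \<inter> X)"
      using is_partition_subset[OF assms(1)] assms(2) by (meson finite_Int finite_subset)
    show "\<forall>X\<in>P. \<forall>Y\<in>P. X \<noteq> Y \<longrightarrow> D \<inter> X \<inter> (D \<inter> Y) = {}"
      using assms(1) unfolding is_partition_def by blast
  qed
  moreover have "(\<Union>X\<in>P. D \<inter> X) = D \<inter> S"
    using assms(1) unfolding is_partition_def by blast
  ultimately show ?thesis by simp
qed

lemma is_partition_sum_card:
  assumes "is_partition S P" and "finite S"
  shows "(\<Sum>X\<in>P. card X) = card S"
  using is_partition_card_Union[OF assms order_refl] assms(1) unfolding is_partition_def by simp

lemma is_partition_UN:
  assumes P: "is_partition U P" and Q: "\<And>S. S \<in> P \<Longrightarrow> is_partition S (Q S)"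
  shows "is_partition U (\<Union>(Q ` P))"
  unfolding is_partition_def
proof (intro conjI ballI impI)
  have "\<Union>(Q S) = S" if "S \<in> P" for S
    using Q[OF that] unfolding is_partition_def by simp
  then have "(\<Union>S\<in>P. \<Union>(Q S)) = \<Union>P"
    by simp
  moreover have "\<Union>(\<Union>(Q ` P)) = (\<Union>S\<in>P. \<Union>(Q S))"
    by blast
  ultimately show "\<Union>(\<Union>(Q ` P)) = U"
    using P unfolding is_partition_def by simp
  show "X \<noteq> {}" if X: "X \<in> \<Union>(Q ` P)" for X
  proof -
    obtain S where "S \<in> P" "X \<in> Q S" using X by blast
    with Q show ?thesis unfolding is_partition_def by simp
  qed
  show "X \<inter> Y = {}" if XY: "X \<in> \<Union>(Q ` P)" "Y \<in> \<Union>(Q ` P)" "X \<noteq> Y" for X Y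
  proof -
    obtain S S' where S: "S \<in> P" "X \<in> Q S" and S': "S' \<in> P" "Y \<in> Q S'"
      using XY(1,2) by blast
    show ?thesis
    proof (cases "S = S'")
      case True
      then show ?thesis using Q[OF S(1)] S S' XY(3) unfolding is_partition_def by blast
    next
      case False
      then have "S \<inter> S' = {}" using P S S' unfolding is_partition_def by blast
      then show ?thesis
        using is_partition_subset[OF Q[OF S(1)] S(2)] is_partition_subset[OF Q[OF S'(1)] S'(2)]
        by blast
    qed
  qed
qed

lemma is_partition_refinements_disjoint:
  assumes "is_partition U P" "\<And>S. S \<in> P \<Longrightarrow> is_partition S (Q S)"
    and "S \<in> P" "S' \<in> P" "S \<noteq> S'"
  shows "Q S \<inter> Q S' = {}"
proof -
  have "S \<inter> S' = {}"
    using assms(1,3-5) unfolding is_partition_def by blast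
  moreover have "X \<noteq> {}" "X \<subseteq> S" if "X \<in> Q S" for X
    using assms(2)[OF assms(3)] that unfolding is_partition_def by blast+
  moreover have "X \<subseteq> S'" if "X \<in> Q S'" for X
    using is_partition_subset[OF assms(2)[OF assms(4)] that] .
  ultimately show ?thesis by blast
qed

subsection \<open>Splitting a member of \<open>\<S>(A\<^sup>n)\<close> along a sub-member\<close>

lemma S_family_split:
  assumes "finite A" and S: "S \<in> S_family A n" and T: "T \<in> S_family A n"
    and "T \<subseteq> S" and "T \<noteq> {}"
  shows "\<exists>Q. is_partition S Q \<and> Q \<subseteq> S_family A n \<and> T \<in> Q \<and> card Q \<le> 2 ^ (card A * card A)"
proof -
  obtain G where
    G: "\<And>a b. a \<in> A \<Longrightarrow> b \<in> A \<Longrightarrow> a \<noteq> b \<Longrightarrow> ab_insensitive A n a b (G {a, b})" and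
    T_iff: "\<And>y. y \<in> T \<longleftrightarrow> y \<in> cube A n \<and> (\<forall>a\<in>A. \<forall>b\<in>A. a \<noteq> b \<longrightarrow> y \<in> G {a, b})"
    using T by (rule S_familyE) iprover
  define pat where "pat y = {(a, b) \<in> A \<times> A. a \<noteq> b \<and> y \<in> G {a, b}}" for y
  define Q where "Q = (\<lambda>q. {y \<in> S. pat y = q}) ` pat ` S"
  have S_cube: "S \<subseteq> cube A n"
    using S by (rule S_family_subset_cube)
  have pat_eq: "pat y = pat x \<longleftrightarrow> (\<forall>a\<in>A. \<forall>b\<in>A. a \<noteq> b \<longrightarrow> (y \<in> G {a, b} \<longleftrightarrow> x \<in> G {a, b}))"
    for x y
    unfolding pat_def by blast
  have atom: "{y \<in> cube A n. pat y = pat x} \<in> S_family A n" for x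
  proof (rule S_familyI[where F = "\<lambda>p. if x \<in> G p then G p else cube A n - G p"])
    show "ab_insensitive A n a b (if x \<in> G {a, b} then G {a, b} else cube A n - G {a, b})"
      if "a \<in> A" "b \<in> A" "a \<noteq> b" for a b
      using G[OF that] by (simp add: ab_insensitive_Diff)
    show "y \<in> {y \<in> cube A n. pat y = pat x} \<longleftrightarrow> y \<in> cube A n \<and>
        (\<forall>a\<in>A. \<forall>b\<in>A. a \<noteq> b \<longrightarrow> y \<in> (if x \<in> G {a, b} then G {a, b} else cube A n - G {a, b}))" for y
      unfolding pat_eq by auto
  qed
  have "{y \<in> S. pat y = pat x} = S \<inter> {y \<in> cube A n. pat y = pat x}" for x
    using S_cube by blast
  then have "Q \<subseteq> S_family A n"
    unfolding Q_def using S_family_Int[OF S atom] by auto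
  moreover obtain t where t: "t \<in> T"
    using \<open>T \<noteq> {}\<close> by blast
  have "\<forall>a\<in>A. \<forall>b\<in>A. a \<noteq> b \<longrightarrow> t \<in> G {a, b}"
    using T_iff t by blast
  then have "pat y = pat t \<longleftrightarrow> (\<forall>a\<in>A. \<forall>b\<in>A. a \<noteq> b \<longrightarrow> y \<in> G {a, b})" for y
    unfolding pat_eq by simp
  then have "T = {y \<in> S. pat y = pat t}"
    using T_iff \<open>T \<subseteq> S\<close> S_cube by auto
  then have "T \<in> Q"
    unfolding Q_def using t \<open>T \<subseteq> S\<close> by blast
  moreover have "card Q \<le> 2 ^ (card A * card A)"
  proof -
    have "finite S"
      using S_cube finite_cube[OF \<open>finite A\<close>] by (rule finite_subset)
    then have "card Q \<le> card (pat ` S)"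
      unfolding Q_def by (intro card_image_le finite_imageI)
    also have "\<dots> \<le> card (Pow (A \<times> A))"
      by (rule card_mono) (auto simp: \<open>finite A\<close> pat_def)
    also have "\<dots> = 2 ^ (card A * card A)"
      by (simp add: card_Pow \<open>finite A\<close> card_cartesian_product)
    finally show ?thesis .
  qed
  ultimately show ?thesis
    using is_partition_fibers[of S pat] unfolding Q_def by blast
qed

subsection \<open>Energy\<close>

definition energy :: "(nat \<Rightarrow> 'a) set \<Rightarrow> (nat \<Rightarrow> 'a) set set \<Rightarrow> real" where
  "energy D P = (\<Sum>X\<in>P. real (card X) * cond_prob X D ^ 2)"

lemma cond_prob_le_1: "cond_prob X D \<le> 1"
  unfolding cond_prob_def
  by (cases "finite X") (auto simp: divide_le_eq_1 card_mono intro: card_mono)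

lemma cond_prob_nonneg: "0 \<le> cond_prob X D"
  unfolding cond_prob_def by simp

lemma energy_UN:
  assumes P: "is_partition U P" "finite U" and Q: "\<And>S. S \<in> P \<Longrightarrow> is_partition S (Q S)"
  shows "energy D (\<Union>(Q ` P)) = (\<Sum>S\<in>P. energy D (Q S))"
  unfolding energy_def
proof (rule sum.UNION_disjoint)
  show "finite P"
    using P by (rule is_partition_finite)
  show "\<forall>S\<in>P. finite (Q S)"
    using Q is_partition_finite is_partition_subset[OF P(1)] P(2) by (meson finite_subset)
  show "\<forall>S\<in>P. \<forall>S'\<in>P. S \<noteq> S' \<longrightarrow> Q S \<inter> Q S' = {}"
    using is_partition_refinements_disjoint[OF P(1) Q] by blast
qed

lemma energy_le_card:
  assumes "is_partition U P" and "finite U"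
  shows "energy D P \<le> real (card U)"
proof -
  have "energy D P \<le> (\<Sum>X\<in>P. real (card X))"
    unfolding energy_def
  proof (rule sum_mono)
    fix X
    have "cond_prob X D ^ 2 \<le> 1"
      by (intro power_le_one cond_prob_nonneg cond_prob_le_1)
    then show "real (card X) * cond_prob X D ^ 2 \<le> real (card X)"
      by (simp add: mult_left_le)
  qed
  also have "\<dots> = real (card U)"
    using is_partition_sum_card[OF assms] by (simp flip: of_nat_sum)
  finally show ?thesis .
qed

lemma energy_refine_eq:
  assumes Q: "is_partition S Q" and "finite S"
  shows "energy D Q - energy D {S} = (\<Sum>X\<in>Q. real (card X) * (cond_prob X D - cond_prob S D) ^ 2)"
proof -
  define s where "s = cond_prob S D"
  have card_pos: "real (card X) > 0" if "X \<in> Q" for X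
    using Q \<open>finite S\<close> that unfolding is_partition_def
    by (metis Sup_upper card_gt_0_iff finite_subset of_nat_0_less_iff)
  have mass: "real (card X) * cond_prob X D = real (card (D \<inter> X))" if "X \<in> Q" for X
    using card_pos[OF that] unfolding cond_prob_def by (simp add: Int_commute)
  have "(\<Sum>X\<in>Q. real (card X) * (cond_prob X D - s) ^ 2)
      = (\<Sum>X\<in>Q. real (card X) * cond_prob X D ^ 2 - 2 * s * real (card (D \<inter> X)) + s\<^sup>2 * real (card X))"
    by (rule sum.cong) (simp_all add: power2_diff algebra_simps flip: mass)
  also have "\<dots> = energy D Q - 2 * s * (\<Sum>X\<in>Q. real (card (D \<inter> X))) + s\<^sup>2 * (\<Sum>X\<in>Q. real (card X))"
    unfolding energy_def by (simp add: sum.distrib sum_subtractf sum_distrib_left)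
  also have "\<dots> = energy D Q - 2 * s * real (card (D \<inter> S)) + s\<^sup>2 * real (card S)"
    using is_partition_sum_card_Int[OF Q \<open>finite S\<close>, of D] is_partition_sum_card[OF Q \<open>finite S\<close>]
    by (simp flip: of_nat_sum)
  also have "\<dots> = energy D Q - energy D {S}"
    unfolding energy_def s_def cond_prob_def
    by (cases "card S = 0") (simp_all add: field_simps power2_eq_square Int_commute)
  finally show ?thesis by (simp add: s_def)
qed

subsection \<open>The energy increment\<close>

definition regular_cell :: "'a set \<Rightarrow> nat \<Rightarrow> real \<Rightarrow> (nat \<Rightarrow> 'a) set \<Rightarrow> (nat \<Rightarrow> 'a) set \<Rightarrow> bool" where
  "regular_cell A n \<epsilon> D S \<longleftrightarrow> (\<forall>T. T \<subseteq> S \<and> T \<in> S_family A n \<and> real (card T) \<ge> \<epsilon> * real (card S) \<longrightarrow>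
     \<bar>cond_prob T D - cond_prob S D\<bar> \<le> \<epsilon>)"

lemma irregular_cell_refinement:
  assumes "finite A" and "0 < \<epsilon>" and S: "S \<in> S_family A n" "S \<noteq> {}"
    and irregular: "\<not> regular_cell A n \<epsilon> D S"
  shows "\<exists>Q. is_partition S Q \<and> Q \<subseteq> S_family A n \<and> card Q \<le> 2 ^ (card A * card A) \<and>
    energy D Q \<ge> energy D {S} + \<epsilon> ^ 3 * real (card S)"
proof -
  have "finite S"
    using S_family_subset_cube[OF S(1)] finite_cube[OF \<open>finite A\<close>] by (rule finite_subset)
  obtain T where T: "T \<subseteq> S" "T \<in> S_family A n" "\<epsilon> * real (card S) \<le> real (card T)"
    and far: "\<epsilon> < \<bar>cond_prob T D - cond_prob S D\<bar>"
    using irregular unfolding regular_cell_def by (auto simp: not_le)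
  have "0 < \<epsilon> * real (card S)"
    using \<open>0 < \<epsilon>\<close> \<open>finite S\<close> \<open>S \<noteq> {}\<close> by (simp add: card_gt_0_iff)
  then have "T \<noteq> {}" using T(3) by auto
  obtain Q where Q: "is_partition S Q" "Q \<subseteq> S_family A n" "T \<in> Q" "card Q \<le> 2 ^ (card A * card A)"
    using S_family_split[OF \<open>finite A\<close> S(1) T(2,1) \<open>T \<noteq> {}\<close>] by blast
  have "\<epsilon> ^ 3 * real (card S) = (\<epsilon> * real (card S)) * \<epsilon> ^ 2"
    by (simp add: power3_eq_cube power2_eq_square)
  also have "\<dots> \<le> real (card T) * (cond_prob T D - cond_prob S D) ^ 2"
    using T(3) far \<open>0 < \<epsilon>\<close> by (intro mult_mono) (auto simp flip: abs_le_square_iff)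
  also have "\<dots> \<le> (\<Sum>X\<in>Q. real (card X) * (cond_prob X D - cond_prob S D) ^ 2)"
    using Q(3) is_partition_finite[OF Q(1) \<open>finite S\<close>] by (intro member_le_sum) auto
  also have "\<dots> = energy D Q - energy D {S}"
    using energy_refine_eq[OF Q(1) \<open>finite S\<close>] by simp
  finally show ?thesis using Q by (intro exI[of _ Q]) auto
qed

lemma cell_refinement:
  assumes "finite A" and "0 < \<epsilon>" and S: "S \<in> S_family A n" "S \<noteq> {}"
  shows "\<exists>Q. is_partition S Q \<and> Q \<subseteq> S_family A n \<and> card Q \<le> 2 ^ (card A * card A) \<and>
    energy D {S} + (if regular_cell A n \<epsilon> D S then 0 else \<epsilon> ^ 3 * real (card S)) \<le> energy D Q"
proof (cases "regular_cell A n \<epsilon> D S")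
  case True
  have "is_partition S {S}"
    using \<open>S \<noteq> {}\<close> by (rule is_partition_singleton)
  then show ?thesis
    using True S(1) by (intro exI[of _ "{S}"]) simp
next
  case False
  then show ?thesis
    using irregular_cell_refinement[OF assms] by simp
qed

lemma irregular_cells_mass:
  assumes P: "is_partition (cube A n) P" and "finite A"
    and few_regular: "unif_prob A n (\<Union>{S\<in>P. regular_cell A n \<epsilon> D S}) < 1 - \<epsilon>"
  shows "\<epsilon> * real (card (cube A n)) \<le> (\<Sum>S\<in>{S\<in>P. \<not> regular_cell A n \<epsilon> D S}. real (card S))"
proof -
  let ?G = "{S\<in>P. regular_cell A n \<epsilon> D S}" and ?B = "{S\<in>P. \<not> regular_cell A n \<epsilon> D S}"
  have fin: "finite (cube A n)"
    using \<open>finite A\<close> by (rule finite_cube)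
  have "card (cube A n) = card (\<Union>P)"
    using P unfolding is_partition_def by simp
  also have "\<dots> = card (\<Union>?G) + (\<Sum>S\<in>?B. card S)"
    using is_partition_card_Union[OF P fin, of P] is_partition_card_Union[OF P fin, of ?G]
      sum.If_cases[OF is_partition_finite[OF P fin], of "regular_cell A n \<epsilon> D" card card]
    by (simp add: Int_def)
  finally have split: "card (cube A n) = card (\<Union>?G) + (\<Sum>S\<in>?B. card S)" .
  have "\<Union>?G \<subseteq> cube A n"
    using P unfolding is_partition_def by blast
  then have "real (card (\<Union>?G)) \<le> (1 - \<epsilon>) * real (card (cube A n))"
    using few_regular card_mono[OF fin] unfolding unif_prob_def
    by (cases "card (cube A n) = 0") (simp_all add: Int_absorb2 field_simps)
  then show ?thesis
    using split by (simp add: algebra_simps)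
qed

lemma energy_increment:
  assumes "finite A" and "0 < \<epsilon>"
    and P: "is_partition (cube A n) P" "P \<subseteq> S_family A n"
    and few_regular: "unif_prob A n (\<Union>{S\<in>P. regular_cell A n \<epsilon> D S}) < 1 - \<epsilon>"
  shows "\<exists>P'. is_partition (cube A n) P' \<and> P' \<subseteq> S_family A n \<and>
    card P' \<le> card P * 2 ^ (card A * card A) \<and>
    energy D P + \<epsilon> ^ 4 * real (card (cube A n)) \<le> energy D P'"
proof -
  define R :: nat where "R = 2 ^ (card A * card A)"
  define gain where "gain S = (if regular_cell A n \<epsilon> D S then 0 else \<epsilon> ^ 3 * real (card S))" for S
  have fin: "finite (cube A n)"
    using \<open>finite A\<close> by (rule finite_cube)
  have fP: "finite P"
    using P(1) fin by (rule is_partition_finite)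
  have "\<exists>Q. is_partition S Q \<and> Q \<subseteq> S_family A n \<and> card Q \<le> R \<and> energy D {S} + gain S \<le> energy D Q"
    if "S \<in> P" for S
  proof -
    have "S \<in> S_family A n" "S \<noteq> {}"
      using P that unfolding is_partition_def by auto
    from cell_refinement[OF \<open>finite A\<close> \<open>0 < \<epsilon>\<close> this, of D] show ?thesis
      unfolding gain_def R_def .
  qed
  then obtain Q where Q: "\<And>S. S \<in> P \<Longrightarrow> is_partition S (Q S)" "\<And>S. S \<in> P \<Longrightarrow> Q S \<subseteq> S_family A n"
      "\<And>S. S \<in> P \<Longrightarrow> card (Q S) \<le> R" "\<And>S. S \<in> P \<Longrightarrow> energy D {S} + gain S \<le> energy D (Q S)"
    by metis
  have "card (\<Union>(Q ` P)) \<le> (\<Sum>S\<in>P. card (Q S))"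
    using fP by (rule card_UN_le)
  also have "\<dots> \<le> card P * R"
    using sum_mono[of P "\<lambda>S. card (Q S)" "\<lambda>_. R"] Q(3) by simp
  finally have card: "card (\<Union>(Q ` P)) \<le> card P * R" .
  have "\<epsilon> ^ 4 * real (card (cube A n)) \<le> \<epsilon> ^ 3 * (\<Sum>S\<in>{S\<in>P. \<not> regular_cell A n \<epsilon> D S}. real (card S))"
    using irregular_cells_mass[OF P(1) \<open>finite A\<close> few_regular] \<open>0 < \<epsilon>\<close>
    by (simp add: power_def mult_left_mono)
  also have "\<dots> = (\<Sum>S\<in>P. gain S)"
    unfolding gain_def using fP by (auto simp: sum_distrib_left sum.inter_filter intro!: sum.cong)
  finally have "energy D P + \<epsilon> ^ 4 * real (card (cube A n)) \<le> (\<Sum>S\<in>P. energy D {S} + gain S)"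
    by (simp add: energy_def sum.distrib)
  also have "\<dots> \<le> (\<Sum>S\<in>P. energy D (Q S))"
    by (rule sum_mono) (rule Q(4))
  also have "\<dots> = energy D (\<Union>(Q ` P))"
    using energy_UN[OF P(1) fin, of Q D] Q(1) by simp
  finally show ?thesis
    using is_partition_UN[OF P(1) Q(1)] Q(2) card unfolding R_def by blast
qed

lemma energy_increment_iterate:
  assumes "finite A" and "A \<noteq> {}" and "0 < \<epsilon>"
  shows "\<exists>P. is_partition (cube A n) P \<and> P \<subseteq> S_family A n \<and>
    card P \<le> (2 ^ (card A * card A)) ^ r \<and>
    (1 - \<epsilon> \<le> unif_prob A n (\<Union>{S\<in>P. regular_cell A n \<epsilon> D S}) \<or>
     real r * \<epsilon> ^ 4 * real (card (cube A n)) \<le> energy D P)"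
proof (induction r)
  case 0
  have "is_partition (cube A n) {cube A n}"
    using cube_nonempty[OF \<open>A \<noteq> {}\<close>] by (rule is_partition_singleton)
  moreover have "0 \<le> energy D {cube A n}"
    unfolding energy_def by simp
  ultimately show ?case
    using cube_in_S_family by (intro exI[of _ "{cube A n}"]) auto
next
  case (Suc r)
  let ?R = "2 ^ (card A * card A) :: nat"
  obtain P where P: "is_partition (cube A n) P" "P \<subseteq> S_family A n" "card P \<le> ?R ^ r"
    and alt: "1 - \<epsilon> \<le> unif_prob A n (\<Union>{S\<in>P. regular_cell A n \<epsilon> D S}) \<or>
      real r * \<epsilon> ^ 4 * real (card (cube A n)) \<le> energy D P"
    using Suc.IH by blast
  show ?case
  proof (cases "1 - \<epsilon> \<le> unif_prob A n (\<Union>{S\<in>P. regular_cell A n \<epsilon> D S})")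
    case True
    have "card P \<le> ?R ^ Suc r"
      using P(3) by (rule order_trans) (intro power_increasing; simp)
    then show ?thesis
      using P True by (intro exI[of _ P]) auto
  next
    case False
    then obtain P' where P': "is_partition (cube A n) P'" "P' \<subseteq> S_family A n"
      "card P' \<le> card P * ?R" "energy D P + \<epsilon> ^ 4 * real (card (cube A n)) \<le> energy D P'"
      using energy_increment[OF \<open>finite A\<close> \<open>0 < \<epsilon>\<close> P(1,2)] by (auto simp: not_le)
    have "card P' \<le> ?R ^ Suc r"
      using P'(3) P(3) by (simp add: mult.commute order_trans)
    moreover have "real (Suc r) * \<epsilon> ^ 4 * real (card (cube A n)) \<le> energy D P'"
      using alt False P'(4) by (simp add: algebra_simps)
    ultimately show ?thesis
      using P' by blast
  qed
qed

lemma regular_partition_exists: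
  assumes "finite A" and "card A = k" and "0 < k" and "0 < \<epsilon>"
  shows "\<exists>M P P'. 0 < M \<and> M \<le> (2 ^ (k * k)) ^ (nat \<lceil>1 / \<epsilon> ^ 4\<rceil> + 1) \<and>
    is_partition (cube A n) P \<and> P \<subseteq> S_family A n \<and> card P = M \<and> P' \<subseteq> P \<and>
    unif_prob A n (\<Union>P') \<ge> 1 - \<epsilon> \<and>
    (\<forall>S\<in>P'. \<forall>T. T \<subseteq> S \<and> T \<in> S_family A n \<and> real (card T) \<ge> \<epsilon> * real (card S) \<longrightarrow>
       \<bar>cond_prob T D - cond_prob S D\<bar> \<le> \<epsilon>)"
proof -
  define L :: nat where "L = nat \<lceil>1 / \<epsilon> ^ 4\<rceil> + 1"
  have "1 / \<epsilon> ^ 4 < real L"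
    unfolding L_def by linarith
  then have L: "1 < real L * \<epsilon> ^ 4"
    using \<open>0 < \<epsilon>\<close> by (simp add: field_simps)
  have "A \<noteq> {}"
    using assms(2,3) by auto
  have fin: "finite (cube A n)" and pos: "0 < card (cube A n)"
    using finite_cube[OF \<open>finite A\<close>] cube_nonempty[OF \<open>A \<noteq> {}\<close>] by (auto simp: card_gt_0_iff)
  obtain P where P: "is_partition (cube A n) P" "P \<subseteq> S_family A n" "card P \<le> (2 ^ (k * k)) ^ L"
    and alt: "1 - \<epsilon> \<le> unif_prob A n (\<Union>{S\<in>P. regular_cell A n \<epsilon> D S}) \<or>
      real L * \<epsilon> ^ 4 * real (card (cube A n)) \<le> energy D P"
    using energy_increment_iterate[OF \<open>finite A\<close> \<open>A \<noteq> {}\<close> \<open>0 < \<epsilon>\<close>, of n L D, unfolded assms(2)]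
    by blast
  text \<open>The energy is at most \<open>|A\<^sup>n| < L \<epsilon>\<^sup>4 |A\<^sup>n|\<close>, so the iteration must have stopped.\<close>
  have "real (card (cube A n)) < real L * \<epsilon> ^ 4 * real (card (cube A n))"
    using mult_strict_right_mono[OF L, of "real (card (cube A n))"] pos by simp
  then have cover: "1 - \<epsilon> \<le> unif_prob A n (\<Union>{S\<in>P. regular_cell A n \<epsilon> D S})"
    using alt energy_le_card[OF P(1) fin, of D] by linarith
  have "P \<noteq> {}"
    using P(1) pos unfolding is_partition_def by auto
  then have "0 < card P"
    using is_partition_finite[OF P(1) fin] by (simp add: card_gt_0_iff)
  show ?thesis
    by (rule exI[of _ "card P"], rule exI[of _ P], rule exI[of _ "{S\<in>P. regular_cell A n \<epsilon> D S}"])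
      (use P cover \<open>0 < card P\<close> in \<open>auto simp: L_def regular_cell_def\<close>)
qed

theorem corollary4p4:
  fixes k :: nat and \<epsilon> :: real
  assumes "k \<ge> 2" and "0 < \<epsilon>" and "\<epsilon> \<le> 1"
  shows "\<exists>N::nat. N > 0 \<and>
    (\<forall>(n::nat) (A::nat set) D. n > 0 \<longrightarrow> finite A \<longrightarrow> card A = k \<longrightarrow> D \<subseteq> cube A n \<longrightarrow>
      (\<exists>(M::nat) P P'. 0 < M \<and> M \<le> N \<and> is_partition (cube A n) P \<and>
         P \<subseteq> S_family A n \<and> card P = M \<and> P' \<subseteq> P \<and>
         unif_prob A n (\<Union>P') \<ge> 1 - \<epsilon> \<and>
         (\<forall>S\<in>P'. \<forall>T. T \<subseteq> S \<and> T \<in> S_family A n \<and> real (card T) \<ge> \<epsilon> * real (card S) \<longrightarrow>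
            \<bar>cond_prob T D - cond_prob S D\<bar> \<le> \<epsilon>)))"
  by (rule exI[of _ "(2 ^ (k * k)) ^ (nat \<lceil>1 / \<epsilon> ^ 4\<rceil> + 1)"],
      intro conjI allI impI regular_partition_exists) (use assms in simp_all)

end
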